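(* For every $n,k\ge1$ and $p\in[0,1]$, there is a randomized selection algorithm in the rank query model that runs in $k$ rounds, succeeds with probability $p$ on every input of length $n$, and issues an expected number of queries at most $np\frac{k+1}{2k}+1$ on every input.
   Context: Selection with rank queries: there is a vector $\vec{x}=(x_1,\ldots,x_n)$ whose ranks form an unknown permutation of $\{1,\ldots,n\}$; a rank $r$ is given and the goal is to output the index $i$ with $\mathrm{rank}(x_i)=r$. Queries have the form "How is $\mathrm{rank}(x_j)$ compared to $m$?", with answer "$<$", "$=$" or "$>$". An algorithm runs in $k$ rounds if in each of $k$ rounds it submits a set of queries chosen depending only on answers of earlier rounds (and its randomness), then receives all answers. A randomized algorithm is a distribution over deterministic algorithms; probabilities and expectations are over its randomness. *)

theory Defs
  imports "HOL-Probability.Probability" "HOL-Combinatorics.Permutations"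
begin

datatype answer = Lt | Eq | Gt

text \<open>A query (j, m) asks how rank(x_j) compares to m.\<close>
type_synonym query = "nat \<times> nat"

text \<open>The ranks of the input are given by a permutation sigma of {1..n}:
  sigma j = rank(x_j). Answer to query (j,m).\<close>
definition ans :: "(nat \<Rightarrow> nat) \<Rightarrow> query \<Rightarrow> answer" where
  "ans \<sigma> q = (if \<sigma> (fst q) < snd q then Lt else if \<sigma> (fst q) = snd q then Eq else Gt)"

text \<open>A transcript: for each completed round, the partial map from the queries
  asked in that round to their answers.\<close>
type_synonym transcript = "(query \<Rightarrow> answer option) list"

text \<open>A deterministic round-based algorithm: the set of queries of the next round is
  a function of the answers of earlier rounds; the output is a function of all answers.\<close>
record det_alg =
  qry :: "transcript \<Rightarrow> query set"
  out :: "transcript \<Rightarrow> nat"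

definition valid_alg :: "det_alg \<Rightarrow> bool" where
  "valid_alg A \<longleftrightarrow> (\<forall>t. finite (qry A t))"

fun run :: "det_alg \<Rightarrow> (nat \<Rightarrow> nat) \<Rightarrow> nat \<Rightarrow> transcript" where
  "run A \<sigma> 0 = []"
| "run A \<sigma> (Suc i) =
     (let t = run A \<sigma> i in t @ [\<lambda>q. if q \<in> qry A t then Some (ans \<sigma> q) else None])"

definition num_queries :: "det_alg \<Rightarrow> (nat \<Rightarrow> nat) \<Rightarrow> nat \<Rightarrow> nat" where
  "num_queries A \<sigma> k = (\<Sum>i<k. card (qry A (run A \<sigma> i)))"

definition alg_output :: "det_alg \<Rightarrow> (nat \<Rightarrow> nat) \<Rightarrow> nat \<Rightarrow> nat" where
  "alg_output A \<sigma> k = out A (run A \<sigma> k)"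

definition succeeds :: "nat \<Rightarrow> nat \<Rightarrow> det_alg \<Rightarrow> (nat \<Rightarrow> nat) \<Rightarrow> nat \<Rightarrow> bool" where
  "succeeds n r A \<sigma> k \<longleftrightarrow> alg_output A \<sigma> k \<in> {1..n} \<and> \<sigma> (alg_output A \<sigma> k) = r"

end

theory Submission
  imports Defs
begin

text \<open>Let t0 be the index of rank r. With probability p the algorithm rotates the indices by a
  uniformly random shift s, cuts them into k consecutive blocks of length b = \<lceil>n/k\<rceil>, and in
  round i asks every index of block i whether its rank is r, until some answer is Eq; otherwise it
  asks nothing. The scan finds t0 within k rounds, at the cost of the number of indices in the
  blocks up to that of t0. Averaged over the shift, this cost is
  (1/n) \<Sum>q<n. #{p<n. p div b \<le> q div b}; counting the pairs (p, q) together with their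
  transposes bounds it by (n + b)/2 \<le> n(k+1)/(2k) + 1/2.\<close>

lemma inj_on_add_mod: "inj_on (\<lambda>x. (x + c) mod n) {a..<a + (n::nat)}"
proof (rule linorder_inj_onI')
  fix x y assume "x \<in> {a..<a + n}" "y \<in> {a..<a + n}" "x < y"
  then have "0 < y - x" "y - x < n" by auto
  then have "\<not> n dvd (y + c) - (x + c)" by (simp add: nat_dvd_not_less)
  then show "(x + c) mod n \<noteq> (y + c) mod n"
    using mod_eq_dvd_iff_nat[of "x + c" "y + c" n] \<open>x < y\<close> by simp
qed

lemma bij_betw_add_mod:
  fixes n c a :: nat
  assumes "0 < n" shows "bij_betw (\<lambda>x. (x + c) mod n) {a..<a + n} {..<n}"
proof -
  have "(\<lambda>x. (x + c) mod n) ` {a..<a + n} = {..<n}"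
    using assms card_image[OF inj_on_add_mod, of c n a]
    by (intro card_subset_eq) auto
  then show ?thesis using inj_on_add_mod by (simp add: bij_betw_def)
qed

lemma sum_add_mod: "0 < (n::nat) \<Longrightarrow> (\<Sum>s<n. h ((s + c) mod n)) = (\<Sum>q<n. h q)"
  using sum.reindex_bij_betw[OF bij_betw_add_mod, of n h c 0] by (simp add: atLeast0LessThan)

lemma card_add_mod:
  fixes n c a :: nat
  assumes "0 < n" shows "card {j\<in>{a..<a + n}. P ((j + c) mod n)} = card {q\<in>{..<n}. P q}"
proof -
  let ?f = "\<lambda>x. (x + c) mod n"
  have bij: "bij_betw ?f {a..<a + n} {..<n}" by (rule bij_betw_add_mod[OF assms])
  have "?f ` {j\<in>{a..<a + n}. P (?f j)} = {q\<in>?f ` {a..<a + n}. P q}"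
    by auto
  also have "\<dots> = {q\<in>{..<n}. P q}"
    using bij by (simp add: bij_betw_def)
  finally have "bij_betw ?f {j\<in>{a..<a + n}. P (?f j)} {q\<in>{..<n}. P q}"
    by (rule bij_betw_subset[OF bij, rotated]) auto
  then show ?thesis by (rule bij_betw_same_card)
qed

lemma card_div_eq_le:
  assumes "0 < b" shows "card {p\<in>A. p div b = (c::nat)} \<le> b"
proof -
  have "{p\<in>A. p div b = c} \<subseteq> {c * b..<c * b + b}"
  proof
    fix p assume "p \<in> {p\<in>A. p div b = c}"
    then show "p \<in> {c * b..<c * b + b}"
      using div_mult_mod_eq[of p b] mod_less_divisor[OF assms, of p] by auto
  qed
  then have "card {p\<in>A. p div b = c} \<le> card {c * b..<c * b + b}"
    by (rule card_mono[rotated]) simp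
  then show ?thesis by simp
qed

lemma twice_sum_card_le_le:
  fixes f :: "'a \<Rightarrow> 'b::linorder"
  assumes "finite A" and fibre: "\<And>q. q \<in> A \<Longrightarrow> card {p\<in>A. f p = f q} \<le> b"
  shows "2 * (\<Sum>q\<in>A. card {p\<in>A. f p \<le> f q}) \<le> card A * card A + card A * b"
proof -
  let ?below = "\<lambda>q. {p\<in>A. f p \<le> f q}" and ?above = "\<lambda>q. {p\<in>A. f q \<le> f p}"
  have split: "card (?below q) + card (?above q) = card A + card {p\<in>A. f p = f q}" for q
  proof -
    have "?below q \<union> ?above q = A" "?below q \<inter> ?above q = {p\<in>A. f p = f q}"
      by auto
    then show ?thesis
      using card_Un_Int[of "?below q" "?above q"] \<open>finite A\<close> by simp
  qed
  have transpose: "(\<Sum>q\<in>A. card (?above q)) = (\<Sum>q\<in>A. card (?below q))"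
    unfolding card_eq_sum sum.inter_filter[OF \<open>finite A\<close>] by (rule sum.swap)
  have "2 * (\<Sum>q\<in>A. card (?below q)) = (\<Sum>q\<in>A. card (?below q) + card (?above q))"
    by (simp add: sum.distrib transpose)
  also have "\<dots> = (\<Sum>q\<in>A. card A + card {p\<in>A. f p = f q})"
    by (simp only: split)
  also have "\<dots> \<le> (\<Sum>q\<in>A. card A + b)"
    by (intro sum_mono add_left_mono fibre)
  finally show ?thesis by (simp add: algebra_simps)
qed

lemma nn_integral_bind_bernoulli:
  assumes "0 \<le> p" "p \<le> 1"
  shows "(\<integral>\<^sup>+x. f x \<partial>bind_pmf (bernoulli_pmf p) (\<lambda>c. if c then M else N))
       = ennreal p * (\<integral>\<^sup>+x. f x \<partial>M) + ennreal (1 - p) * (\<integral>\<^sup>+x. f x \<partial>N)"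
  using assms by (simp add: nn_integral_bind_pmf mult.commute)

lemma prob_bind_bernoulli:
  assumes "0 \<le> p" "p \<le> 1"
  shows "measure_pmf.prob (bind_pmf (bernoulli_pmf p) (\<lambda>c. if c then M else N)) S
       = p * measure_pmf.prob M S + (1 - p) * measure_pmf.prob N S"
proof -
  have "ennreal (measure_pmf.prob (bind_pmf (bernoulli_pmf p) (\<lambda>c. if c then M else N)) S)
      = ennreal (measure_pmf.prob M S) * ennreal p + ennreal (measure_pmf.prob N S) * ennreal (1 - p)"
    using assms by (simp add: measure_pmf.emeasure_eq_measure[symmetric])
  also have "\<dots> = ennreal (p * measure_pmf.prob M S + (1 - p) * measure_pmf.prob N S)"
    using assms by (simp add: ennreal_mult'' ennreal_plus mult.commute)
  finally show ?thesis using assms by (subst (asm) ennreal_inj) auto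
qed

definition found :: "nat \<Rightarrow> transcript \<Rightarrow> nat set" where
  "found r t = {j. \<exists>a\<in>set t. a (j, r) = Some Eq}"

text \<open>A transcript of length i is seen before round i, so index j is asked in round g j.\<close>

definition scan_alg :: "nat \<Rightarrow> nat set \<Rightarrow> (nat \<Rightarrow> nat) \<Rightarrow> det_alg" where
  "scan_alg r J g =
     \<lparr>qry = (\<lambda>t. if found r t = {} then (\<lambda>j. (j, r)) ` {j\<in>J. g j = length t} else {}),
      out = (\<lambda>t. SOME j. j \<in> found r t)\<rparr>"

lemma found_append: "found r (t @ [a]) = found r t \<union> {j. a (j, r) = Some Eq}"
  unfolding found_def by auto

lemma length_run [simp]: "length (run A \<sigma> i) = i"
  by (induction i) (auto simp: Let_def)

lemma valid_scan_alg: "finite J \<Longrightarrow> valid_alg (scan_alg r J g)"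
  by (simp add: valid_alg_def scan_alg_def)

lemma found_run_scan_alg:
  assumes "inj_on \<sigma> J" "t0 \<in> J" "\<sigma> t0 = r"
  shows "found r (run (scan_alg r J g) \<sigma> i) = (if g t0 < i then {t0} else {})"
proof (induction i)
  case 0
  then show ?case by (simp add: found_def)
next
  case (Suc i)
  let ?A = "scan_alg r J g"
  let ?t = "run ?A \<sigma> i"
  have run: "run ?A \<sigma> (Suc i) = ?t @ [\<lambda>q. if q \<in> qry ?A ?t then Some (ans \<sigma> q) else None]"
    by (simp add: Let_def)
  show ?case
  proof (cases "g t0 < i")
    case True
    then have "qry ?A ?t = {}" using Suc.IH by (simp add: scan_alg_def)
    then show ?thesis using True Suc.IH by (simp only: run found_append) auto
  next
    case False
    then have "qry ?A ?t = (\<lambda>j. (j, r)) ` {j\<in>J. g j = i}" using Suc.IH by (simp add: scan_alg_def)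
    then have "{j. (if (j, r) \<in> qry ?A ?t then Some (ans \<sigma> (j, r)) else None) = Some Eq}
        = {j\<in>J. g j = i \<and> \<sigma> j = r}"
      by (auto simp: ans_def)
    also have "\<dots> = (if g t0 = i then {t0} else {})"
      using assms by (auto dest: inj_onD)
    finally show ?thesis using False Suc.IH by (simp only: run found_append) auto
  qed
qed

lemma succeeds_scan_alg:
  assumes "inj_on \<sigma> J" "J \<subseteq> {1..n}" "t0 \<in> J" "\<sigma> t0 = r" "g t0 < k"
  shows "succeeds n r (scan_alg r J g) \<sigma> k"
proof -
  have "alg_output (scan_alg r J g) \<sigma> k = t0"
    using found_run_scan_alg[OF assms(1,3,4), of g k] assms(5)
    by (simp add: alg_output_def scan_alg_def)
  then show ?thesis using assms unfolding succeeds_def by auto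
qed

lemma num_queries_scan_alg:
  assumes "inj_on \<sigma> J" "finite J" "t0 \<in> J" "\<sigma> t0 = r" "g t0 < k"
  shows "num_queries (scan_alg r J g) \<sigma> k = card {j\<in>J. g j \<le> g t0}"
proof -
  let ?A = "scan_alg r J g"
  have round: "card (qry ?A (run ?A \<sigma> i)) = (if i \<le> g t0 then card {j\<in>J. g j = i} else 0)" for i
    using found_run_scan_alg[OF assms(1,3,4), of g i]
    by (simp add: scan_alg_def card_image inj_on_def)
  have "num_queries ?A \<sigma> k = (\<Sum>i\<le>g t0. card {j\<in>J. g j = i})"
    unfolding num_queries_def round using assms(5)
    by (intro sum.mono_neutral_cong_right) auto
  also have "\<dots> = (\<Sum>i\<le>g t0. card {j\<in>{j\<in>J. g j \<le> g t0}. g j = i})"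
    by (intro sum.cong refl arg_cong[where f = card]) auto
  also have "\<dots> = card {j\<in>J. g j \<le> g t0}"
    unfolding card_eq_sum using assms(2) by (intro sum.group) auto
  finally show ?thesis .
qed

definition block :: "nat \<Rightarrow> nat \<Rightarrow> nat \<Rightarrow> nat \<Rightarrow> nat" where
  "block n k s j = ((j + s) mod n) div ((n + k - 1) div k)"

lemma block_less:
  assumes "0 < n" "0 < k" shows "block n k s j < k"
proof -
  have "n \<le> (n + k - 1) div k * k"
    using div_mult_mod_eq[of "n + k - 1" k] mod_less_divisor[OF \<open>0 < k\<close>, of "n + k - 1"]
    by linarith
  then show ?thesis unfolding block_def using \<open>0 < n\<close>
    by (intro less_mult_imp_div_less) (metis mod_less_divisor mult.commute order_less_le_trans)
qed

lemma real_block_length_le: "0 < k \<Longrightarrow> real ((n + k - 1) div k) \<le> real n / real k + 1"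
proof -
  assume "0 < k"
  have "real ((n + k - 1) div k) \<le> real (n + k - 1) / real k"
    by (rule of_nat_div_le_of_nat)
  also have "\<dots> \<le> (real n + real k) / real k"
    by (intro divide_right_mono) auto
  also have "\<dots> = real n / real k + 1"
    using \<open>0 < k\<close> by (simp add: field_simps)
  finally show ?thesis .
qed

lemma sum_num_queries_block_scan:
  assumes "\<sigma> permutes {1..n}" "r \<in> {1..n}" "0 < n" "0 < k"
  shows "2 * (\<Sum>s<n. num_queries (scan_alg r {1..n} (block n k s)) \<sigma> k)
           \<le> n * n + n * ((n + k - 1) div k)"
proof -
  let ?b = "(n + k - 1) div k"
  obtain t0 where t0: "t0 \<in> {1..n}" "\<sigma> t0 = r"
    using assms(1,2) permutes_image[of \<sigma> "{1..n}"] by (metis imageE)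
  have "(\<Sum>s<n. num_queries (scan_alg r {1..n} (block n k s)) \<sigma> k)
      = (\<Sum>s<n. card {j\<in>{1..n}. block n k s j \<le> block n k s t0})"
    using num_queries_scan_alg[OF permutes_inj_on[OF assms(1)] _ t0] block_less[OF assms(3,4)]
    by simp
  also have "\<dots> = (\<Sum>s<n. card {p\<in>{..<n}. p div ?b \<le> ((t0 + s) mod n) div ?b})"
  proof (rule sum.cong[OF refl])
    fix s
    have "{1..n} = {1..<1 + n}" by auto
    then show "card {j\<in>{1..n}. block n k s j \<le> block n k s t0}
             = card {p\<in>{..<n}. p div ?b \<le> ((t0 + s) mod n) div ?b}"
      using card_add_mod[OF assms(3), where a = 1 and c = s
                          and P = "\<lambda>q. q div ?b \<le> ((t0 + s) mod n) div ?b"]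
      by (simp add: block_def)
  qed
  also have "\<dots> = (\<Sum>q<n. card {p\<in>{..<n}. p div ?b \<le> q div ?b})"
    using sum_add_mod[OF assms(3), of "\<lambda>q. card {p\<in>{..<n}. p div ?b \<le> q div ?b}" t0]
    by (simp add: add.commute)
  moreover have "0 < ?b"
    using assms(3,4) by (simp add: div_greater_zero_iff)
  ultimately show ?thesis
    using twice_sum_card_le_le[of "{..<n}" "\<lambda>p. p div ?b" ?b] card_div_eq_le[of ?b "{..<n}"]
    by simp
qed

definition rotating_scan :: "nat \<Rightarrow> nat \<Rightarrow> nat \<Rightarrow> det_alg pmf" where
  "rotating_scan n k r = map_pmf (\<lambda>s. scan_alg r {1..n} (block n k s)) (pmf_of_set {..<n})"

definition idle_alg :: det_alg where
  "idle_alg = \<lparr>qry = (\<lambda>_. {}), out = (\<lambda>_. 0)\<rparr>"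

definition selection_pmf :: "nat \<Rightarrow> nat \<Rightarrow> real \<Rightarrow> nat \<Rightarrow> det_alg pmf" where
  "selection_pmf n k p r =
     bind_pmf (bernoulli_pmf p) (\<lambda>c. if c then rotating_scan n k r else return_pmf idle_alg)"

lemma valid_selection_pmf:
  assumes "0 < n" "A \<in> set_pmf (selection_pmf n k p r)" shows "valid_alg A"
proof -
  have "A = idle_alg \<or> (\<exists>s. A = scan_alg r {1..n} (block n k s))"
    using assms by (auto simp: selection_pmf_def rotating_scan_def split: if_splits)
  moreover have "valid_alg idle_alg"
    by (simp add: valid_alg_def idle_alg_def)
  ultimately show ?thesis
    using valid_scan_alg by auto
qed

lemma prob_succeeds_rotating_scan:
  assumes "\<sigma> permutes {1..n}" "r \<in> {1..n}" "0 < n" "0 < k"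
  shows "measure_pmf.prob (rotating_scan n k r) {A. succeeds n r A \<sigma> k} = 1"
proof -
  obtain t0 where t0: "t0 \<in> {1..n}" "\<sigma> t0 = r"
    using assms(1,2) permutes_image[of \<sigma> "{1..n}"] by (metis imageE)
  have "(\<lambda>s. scan_alg r {1..n} (block n k s)) -` {A. succeeds n r A \<sigma> k} = UNIV"
    using succeeds_scan_alg[OF permutes_inj_on[OF assms(1)] _ t0] block_less[OF assms(3,4)]
    by auto
  then show ?thesis by (simp add: rotating_scan_def)
qed

lemma prob_succeeds_selection_pmf:
  assumes "\<sigma> permutes {1..n}" "r \<in> {1..n}" "0 < n" "0 < k" "0 \<le> p" "p \<le> 1"
  shows "p \<le> measure_pmf.prob (selection_pmf n k p r) {A. succeeds n r A \<sigma> k}"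
  unfolding selection_pmf_def prob_bind_bernoulli[OF assms(5,6)]
  using assms by (simp add: prob_succeeds_rotating_scan)

lemma nn_integral_num_queries_rotating_scan:
  assumes "\<sigma> permutes {1..n}" "r \<in> {1..n}" "0 < n" "0 < k"
  shows "(\<integral>\<^sup>+A. ennreal (real (num_queries A \<sigma> k)) \<partial>rotating_scan n k r)
           \<le> ennreal (real n * (real k + 1) / (2 * real k) + 1 / 2)"
proof -
  define b where "b = (n + k - 1) div k"
  define T where "T = (\<Sum>s<n. num_queries (scan_alg r {1..n} (block n k s)) \<sigma> k)"
  have "(\<integral>\<^sup>+A. ennreal (real (num_queries A \<sigma> k)) \<partial>rotating_scan n k r)
      = (\<Sum>s<n. ennreal (real (num_queries (scan_alg r {1..n} (block n k s)) \<sigma> k))) / of_nat n"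
    unfolding rotating_scan_def nn_integral_map_pmf using assms(3)
    by (subst nn_integral_pmf_of_set) auto
  also have "\<dots> = ennreal (real T / real n)"
    using assms(3) by (simp add: T_def ennreal_of_nat_eq_real_of_nat divide_ennreal sum_nonneg)
  also have "\<dots> \<le> ennreal (real n * (real k + 1) / (2 * real k) + 1 / 2)"
  proof (rule ennreal_leI)
    have "real (2 * T) \<le> real (n * n + n * b)"
      using sum_num_queries_block_scan[OF assms] unfolding T_def b_def of_nat_le_iff .
    then have "real T / real n \<le> (real n + real b) / 2"
      using assms(3) by (simp add: field_simps)
    also have "\<dots> \<le> (real n + real n / real k + 1) / 2"
      using real_block_length_le[OF assms(4), of n] unfolding b_def by (intro divide_right_mono) auto
    also have "\<dots> = real n * (real k + 1) / (2 * real k) + 1 / 2"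
      using assms(4) by (simp add: field_simps)
    finally show "real T / real n \<le> real n * (real k + 1) / (2 * real k) + 1 / 2" .
  qed
  finally show ?thesis .
qed

lemma nn_integral_num_queries_selection_pmf:
  assumes "\<sigma> permutes {1..n}" "r \<in> {1..n}" "0 < n" "0 < k" "0 \<le> p" "p \<le> 1"
  shows "(\<integral>\<^sup>+A. ennreal (real (num_queries A \<sigma> k)) \<partial>selection_pmf n k p r)
           \<le> ennreal (real n * p * (real k + 1) / (2 * real k) + 1)"
proof -
  have "(\<integral>\<^sup>+A. ennreal (real (num_queries A \<sigma> k)) \<partial>selection_pmf n k p r)
      = ennreal p * (\<integral>\<^sup>+A. ennreal (real (num_queries A \<sigma> k)) \<partial>rotating_scan n k r)"
    unfolding selection_pmf_def nn_integral_bind_bernoulli[OF assms(5,6)]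
    by (simp add: idle_alg_def num_queries_def)
  also have "\<dots> \<le> ennreal p * ennreal (real n * (real k + 1) / (2 * real k) + 1 / 2)"
    by (intro mult_left_mono nn_integral_num_queries_rotating_scan[OF assms(1-4)]) simp
  also have "\<dots> = ennreal (real n * p * (real k + 1) / (2 * real k) + p / 2)"
    using assms(5) by (simp add: ennreal_mult[symmetric] field_simps)
  also have "\<dots> \<le> ennreal (real n * p * (real k + 1) / (2 * real k) + 1)"
    using assms(6) by (intro ennreal_leI) simp
  finally show ?thesis .
qed

theorem proposition12:
  fixes n k :: nat and p :: real
  assumes "n \<ge> 1" and "k \<ge> 1" and "0 \<le> p" and "p \<le> 1"
  shows "\<exists>D :: nat \<Rightarrow> det_alg pmf.
           \<forall>r \<in> {1..n}.
             (\<forall>A \<in> set_pmf (D r). valid_alg A) \<and>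
             (\<forall>\<sigma>. \<sigma> permutes {1..n} \<longrightarrow>
                measure_pmf.prob (D r) {A. succeeds n r A \<sigma> k} \<ge> p \<and>
                (\<integral>\<^sup>+ A. ennreal (real (num_queries A \<sigma> k)) \<partial>measure_pmf (D r))
                  \<le> ennreal (real n * p * (real k + 1) / (2 * real k) + 1))"
proof (intro exI[of _ "selection_pmf n k p"] ballI conjI allI impI)
  have "0 < n" "0 < k" using assms(1,2) by auto
  fix r \<sigma> A
  assume "r \<in> {1..n}"
  show "A \<in> set_pmf (selection_pmf n k p r) \<Longrightarrow> valid_alg A"
    using valid_selection_pmf[OF \<open>0 < n\<close>] by blast
  assume "\<sigma> permutes {1..n}"
  then show "p \<le> measure_pmf.prob (selection_pmf n k p r) {A. succeeds n r A \<sigma> k}"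
    and "(\<integral>\<^sup>+A. ennreal (real (num_queries A \<sigma> k)) \<partial>selection_pmf n k p r)
           \<le> ennreal (real n * p * (real k + 1) / (2 * real k) + 1)"
    using prob_succeeds_selection_pmf nn_integral_num_queries_selection_pmf
          \<open>r \<in> {1..n}\<close> \<open>0 < n\<close> \<open>0 < k\<close> assms(3,4)
    by blast+
qed

end
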